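(* Let $A = \begin{bmatrix} B & C \\ C^T & D \end{bmatrix}$ be a real symmetric $n\times n$ matrix, where $B$ is $k\times k$ (so $C$ is $k \times (n-k)$ and $D$ is $(n-k)\times(n-k)$). Then the following are equivalent: (a) $\{1,2,\dots,k\}$ is a P-set of $A$; (b) $\operatorname{rank}(A) = \operatorname{rank}(D) + 2k$; (c) $\{x \in \mathbb{R}^k : x^T C \in \operatorname{RS}(D)\} = \{0\}$.
   Context: All matrices are real. $\operatorname{RS}(D)$ denotes the row space of $D$. For an $n\times n$ matrix $A$ and $\alpha \subseteq \{1,\dots,n\}$, $A(\alpha)$ denotes the principal submatrix obtained by deleting the rows and columns indexed by $\alpha$, and $\nu(A)$ denotes the nullity of $A$. A set $\alpha$ is a P-set of $A$ if $\nu(A(\alpha)) = \nu(A) + |\alpha|$. *)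

theory Defs
  imports "Jordan_Normal_Form.DL_Rank_Submatrix" "Jordan_Normal_Form.Matrix_Kernel"
begin

text \<open>Principal submatrix A(alpha): delete the rows and columns indexed by alpha
  (indices are 0-based, i.e. range over {0..<dim_row A}).\<close>
definition principal_del :: "'a mat \<Rightarrow> nat set \<Rightarrow> 'a mat" where
  "principal_del A \<alpha> = submatrix A (- \<alpha>) (- \<alpha>)"

definition nullity :: "'a :: field mat \<Rightarrow> nat" where
  "nullity A = kernel_dim A"

definition P_set :: "'a :: field mat \<Rightarrow> nat set \<Rightarrow> bool" where
  "P_set A \<alpha> \<longleftrightarrow> \<alpha> \<subseteq> {..<dim_row A} \<and>
     nullity (principal_del A \<alpha>) = nullity A + card \<alpha>"

definition mrank :: "real mat \<Rightarrow> nat" where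
  "mrank A = vec_space.rank (dim_row A) A"

definition RS :: "real mat \<Rightarrow> real vec set" where
  "RS D = vec_space.row_space (dim_col D) D"

end

theory Submission
  imports Defs
begin

text \<open>Write \<open>m = n - k\<close>, let \<open>R = [C; D]\<close> be the last \<open>m\<close> columns of \<open>A\<close> and \<open>L = R\<^sup>T = [C\<^sup>T D]\<close>
  its last \<open>m\<close> rows. Deleting the first \<open>k\<close> rows and columns of \<open>A\<close> leaves \<open>D\<close>, so (a) \<open>\<longleftrightarrow>\<close> (b) is
  rank-nullity. For (b) \<open>\<longleftrightarrow>\<close> (c), the map \<open>y \<mapsto> (0, y)\<close> embeds \<open>ker R\<close> into \<open>ker A\<close> and \<open>ker D\<close>
  into \<open>ker L\<close>, and rank-nullity with \<open>rank R = rank L\<close> gives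
  \<open>rank A + \<nu>(A) + \<nu>(L) = rank D + 2k + \<nu>(R) + \<nu>(D)\<close>.
  Hence \<open>rank A = rank D + 2k\<close> iff both embeddings are onto. Since \<open>D\<close> is symmetric,
  \<open>(x, y) \<in> ker L\<close> for some \<open>y\<close> iff \<open>C\<^sup>T x \<in> RS(D)\<close>; so if (c) holds every vector of \<open>ker L\<close>
  (and of \<open>ker A \<subseteq> ker L\<close>) has the form \<open>(0, y)\<close>, and otherwise a vector \<open>(x, y)\<close> with \<open>x \<noteq> 0\<close>
  makes \<open>ker D\<close> a proper part of \<open>ker L\<close>.\<close>

lemma mult_mat_vec_zero:
  "(A :: 'a :: comm_ring_1 mat) \<in> carrier_mat r c \<Longrightarrow> A *\<^sub>v 0\<^sub>v c = 0\<^sub>v r"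
  by (rule eq_vecI) (auto simp: scalar_prod_def)

lemma zero_vec_append: "0\<^sub>v (k + m) = 0\<^sub>v k @\<^sub>v (0\<^sub>v m :: 'a::zero vec)"
  by (rule eq_vecI) auto

lemma add_vec_eq_0_iff:
  fixes a b :: "'a::ab_group_add vec"
  assumes "a \<in> carrier_vec n" "b \<in> carrier_vec n"
  shows "a + b = 0\<^sub>v n \<longleftrightarrow> a = - b"
proof -
  have "a + b = 0\<^sub>v n \<longleftrightarrow> (\<forall>i<n. a $ i + b $ i = 0)" using assms by (auto simp: vec_eq_iff)
  also have "\<dots> \<longleftrightarrow> a = - b" using assms by (auto simp: vec_eq_iff eq_neg_iff_add_eq_0)
  finally show ?thesis .
qed

lemma mult_mat_vec_uminus:
  "(A :: 'a :: comm_ring_1 mat) \<in> carrier_mat r c \<Longrightarrow> v \<in> carrier_vec c \<Longrightarrow> A *\<^sub>v (- v) = - (A *\<^sub>v v)"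
  by (rule eq_vecI) auto

lemma mult_mat_vec_linear_map:
  fixes M :: "'a::field mat"
  assumes M: "M \<in> carrier_mat r c"
  shows "linear_map class_ring (module_vec TYPE('a) c) (module_vec TYPE('a) r) (\<lambda>v. M *\<^sub>v v)"
  apply (rule linear_map.intro[OF vec_vs vec_vs])
   apply (rule mod_hom.intro)
  using vec_vs unfolding vectorspace_def apply blast
  using vec_vs unfolding vectorspace_def apply blast
  apply (rule mod_hom_axioms.intro)
  using M by (auto simp: LinearCombinations.module_hom_def module_vec_simps
      mult_add_distrib_mat_vec mult_mat_vec)

lemma rank_nullity_mat:
  fixes M :: "'a::field mat"
  assumes M: "M \<in> carrier_mat r c"
  shows "vec_space.rank r M + kernel_dim M = c"
proof -
  interpret V: vec_space "TYPE('a)" c .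
  interpret W: vec_space "TYPE('a)" r .
  interpret K: kernel r c M by (unfold_locales, rule M)
  interpret L: linear_map class_ring "module_vec TYPE('a) c" "module_vec TYPE('a) r" "\<lambda>v. M *\<^sub>v v"
    by (rule mult_mat_vec_linear_map[OF M])
  have im: "L.imT = W.span (set (cols M))"
    using W.col_space_eq[OF M] M unfolding W.col_space_def
    by (auto simp: mod_hom.im_def[OF L.mod_hom_axioms] module_vec_simps)
  have ker: "L.kerT = mat_kernel M"
    using M by (auto simp: mod_hom.ker_def[OF L.mod_hom_axioms] module_vec_simps mat_kernel_def)
  show ?thesis
    using L.rank_nullity[OF V.fin_dim] unfolding im ker W.rank_def V.dim_is_n K.kernel_dim by simp
qed

lemma (in vec_space) card_le_kernel_dim:
  assumes Y: "Y \<in> carrier_mat r n" and S: "finite S" "S \<subseteq> mat_kernel Y"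
    and indep: "\<not> lin_dep S"
  shows "card S \<le> kernel_dim Y"
proof -
  interpret K: kernel r n Y by (unfold_locales, rule Y)
  obtain b where "finite b" "K.basis b" using kernel_basis_exists[OF Y] by blast
  then have "K.Ker.fin_dim" unfolding K.Ker.fin_dim_def K.Ker.basis_def by auto
  moreover have "\<not> K.Ker.lin_dep S" using indep K.lindep_same[OF S(2)] by simp
  ultimately show ?thesis using K.Ker.li_le_dim(2) S by simp
qed

lemma (in vec_space) kernel_basis_card:
  assumes X: "X \<in> carrier_mat r n"
  obtains b where "finite b" "b \<subseteq> mat_kernel X" "\<not> lin_dep b" "span b = mat_kernel X"
    "card b = kernel_dim X"
proof -
  interpret K: kernel r n X by (unfold_locales, rule X)
  obtain b where b: "finite b" "K.basis b" using kernel_basis_exists[OF X] by blast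
  then have bX: "b \<subseteq> mat_kernel X" unfolding K.Ker.basis_def by auto
  show thesis
  proof
    show "\<not> lin_dep b"
      using b(2) K.lindep_same[OF bX] unfolding K.Ker.basis_def by simp
    show "span b = mat_kernel X"
      using b(2) K.span_same[OF bX] unfolding K.Ker.basis_def by simp
    show "card b = kernel_dim X" using K.Ker.dim_basis[OF b] by simp
  qed (use b bX in auto)
qed

lemma kernel_dim_mono:
  fixes X Y :: "'a::field mat"
  assumes X: "X \<in> carrier_mat r1 c" and Y: "Y \<in> carrier_mat r2 c"
    and sub: "mat_kernel X \<subseteq> mat_kernel Y"
  shows "kernel_dim X \<le> kernel_dim Y"
proof -
  interpret V: vec_space "TYPE('a)" c .
  obtain b where "finite b" "b \<subseteq> mat_kernel X" "\<not> V.lin_dep b" "card b = kernel_dim X"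
    using V.kernel_basis_card[OF X] by metis
  then show ?thesis using V.card_le_kernel_dim[OF Y, of b] sub by auto
qed

lemma kernel_dim_strict_mono:
  fixes X Y :: "'a::field mat"
  assumes X: "X \<in> carrier_mat r1 c" and Y: "Y \<in> carrier_mat r2 c"
    and sub: "mat_kernel X \<subseteq> mat_kernel Y"
    and v: "v \<in> mat_kernel Y" "v \<notin> mat_kernel X"
  shows "kernel_dim X < kernel_dim Y"
proof -
  interpret V: vec_space "TYPE('a)" c .
  obtain b where b: "finite b" "b \<subseteq> mat_kernel X" "\<not> V.lin_dep b"
    "V.span b = mat_kernel X" "card b = kernel_dim X"
    using V.kernel_basis_card[OF X] by metis
  have bc: "b \<subseteq> carrier_vec c" using b(2) mat_kernel_carrier[OF X] by blast
  have vc: "v \<in> carrier_vec c" using v(1) mat_kernel_carrier[OF Y] by blast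
  have "\<not> V.lin_dep (insert v b)"
    using V.lin_dep_iff_in_span[OF bc b(3) vc] b(2,4) v(2) by auto
  then have "card (insert v b) \<le> kernel_dim Y"
    using V.card_le_kernel_dim[OF Y] b(1,2) sub v(1) by simp
  moreover have "card (insert v b) = Suc (card b)"
    using b(1,2) v(2) by (intro card_insert_disjoint) auto
  ultimately show ?thesis using b(5) by simp
qed

lemma kernel_dim_cong:
  fixes X Y :: "'a::field mat"
  assumes "X \<in> carrier_mat r1 c" "Y \<in> carrier_mat r2 c" "mat_kernel X = mat_kernel Y"
  shows "kernel_dim X = kernel_dim Y"
  using kernel_dim_mono[OF assms(1,2)] kernel_dim_mono[OF assms(2,1)] assms(3) by (simp add: antisym)

lemma rank_mult_le_left:
  fixes N X :: "'a::field mat"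
  assumes N: "N \<in> carrier_mat r c" and X: "X \<in> carrier_mat c d"
  shows "vec_space.rank r (N * X) \<le> vec_space.rank r N"
proof -
  interpret V: vec_space "TYPE('a)" r .
  have NX: "N * X \<in> carrier_mat r d" using N X by simp
  have cN: "set (cols N) \<subseteq> carrier_vec r" and cNX: "set (cols (N * X)) \<subseteq> carrier_vec r"
    using N NX cols_dim by blast+
  have "set (cols (N * X)) \<subseteq> V.span (set (cols N))"
  proof
    fix v assume "v \<in> set (cols (N * X))"
    then obtain j where "j < d" "v = col (N * X) j" using NX by (auto simp: in_set_conv_nth)
    then have j: "j < d" "v = N *\<^sub>v col X j" using col_mult2[OF N X] by auto
    have "col X j \<in> carrier_vec c" using X j(1) by simp
    then have "N *\<^sub>v col X j \<in> V.col_space N" using V.col_space_eq[OF N] N by auto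
    then show "v \<in> V.span (set (cols N))" using j(2) unfolding V.col_space_def by simp
  qed
  then have incl: "V.span (set (cols (N * X))) \<subseteq> V.span (set (cols N))"
    using V.span_is_subset[OF _ V.span_is_submodule[OF cN]] by blast
  have sN: "VectorSpace.subspace class_ring (V.span (set (cols N))) V.V"
    using V.span_is_subspace cN by auto
  have sNX: "VectorSpace.subspace class_ring (V.span (set (cols (N * X)))) V.V"
    using V.span_is_subspace cNX by auto
  show ?thesis unfolding V.rank_def
    using vectorspace.subspace_dim[OF V.subspace_is_vs[OF sN] V.nested_subspaces[OF sN sNX incl]
        V.fin_dim_span_cols[OF N]] V.fin_dim_span_cols[OF NX] by simp
qed

lemma real_vec_self_scalar_prod_eq_0:
  fixes w :: "real vec"
  assumes "w \<in> carrier_vec n" "w \<bullet> w = 0"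
  shows "w = 0\<^sub>v n"
proof -
  have "w \<bullet>c w = w \<bullet> w" by (simp add: conjugate_vec_def scalar_prod_def)
  then show ?thesis using assms conjugate_square_eq_0_vec by metis
qed

lemma mat_kernel_gram:
  fixes M :: "real mat"
  assumes M: "M \<in> carrier_mat r c"
  shows "mat_kernel (M\<^sup>T * M) = mat_kernel M"
proof
  have G: "M\<^sup>T * M \<in> carrier_mat c c" using M by simp
  show "mat_kernel M \<subseteq> mat_kernel (M\<^sup>T * M)"
    using mat_kernel_mult_subset[OF M, of "M\<^sup>T"] M by simp
  show "mat_kernel (M\<^sup>T * M) \<subseteq> mat_kernel M"
  proof
    fix x assume x: "x \<in> mat_kernel (M\<^sup>T * M)"
    have xc: "x \<in> carrier_vec c" using mat_kernelD(1)[OF G x] .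
    have Mx: "M *\<^sub>v x \<in> carrier_vec r" using M xc by simp
    have "M\<^sup>T *\<^sub>v (M *\<^sub>v x) = 0\<^sub>v c" using mat_kernelD(2)[OF G x] M xc by simp
    then have "(M *\<^sub>v x) \<bullet> (M *\<^sub>v x) = 0"
      using transpose_vec_mult_scalar[OF M xc Mx] xc by simp
    then have "M *\<^sub>v x = 0\<^sub>v r" using real_vec_self_scalar_prod_eq_0[OF Mx] by simp
    then show "x \<in> mat_kernel M" using mat_kernelI[OF M xc] by simp
  qed
qed

lemma rank_transpose_le:
  fixes M :: "real mat"
  assumes M: "M \<in> carrier_mat r c"
  shows "vec_space.rank r M \<le> vec_space.rank c M\<^sup>T"
proof -
  have G: "M\<^sup>T * M \<in> carrier_mat c c" using M by simp
  have "vec_space.rank r M + kernel_dim M = c" by (rule rank_nullity_mat[OF M])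
  moreover have "vec_space.rank c (M\<^sup>T * M) + kernel_dim (M\<^sup>T * M) = c"
    by (rule rank_nullity_mat[OF G])
  moreover have "kernel_dim (M\<^sup>T * M) = kernel_dim M"
    by (rule kernel_dim_cong[OF G M mat_kernel_gram[OF M]])
  moreover have "vec_space.rank c (M\<^sup>T * M) \<le> vec_space.rank c M\<^sup>T"
    using rank_mult_le_left[of "M\<^sup>T" c r M c] M by simp
  ultimately show ?thesis by linarith
qed

lemma rank_transpose:
  fixes M :: "real mat"
  assumes M: "M \<in> carrier_mat r c"
  shows "vec_space.rank c M\<^sup>T = vec_space.rank r M"
  using rank_transpose_le[OF M] rank_transpose_le[of "M\<^sup>T" c r] M by (simp add: antisym)

text \<open>The witness is \<open>diag(1\<^sub>k, X\<^sup>T X)\<close>: the Gram matrix is square and has the kernel of \<open>X\<close>.\<close>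

lemma zero_prefix_kernel_mat:
  fixes X :: "real mat"
  assumes X: "X \<in> carrier_mat r m"
  obtains E where "E \<in> carrier_mat (k + m) (k + m)"
    "mat_kernel E = (\<lambda>y. 0\<^sub>v k @\<^sub>v y) ` mat_kernel X" "kernel_dim E = kernel_dim X"
proof
  let ?G = "X\<^sup>T * X"
  define E where "E = four_block_mat (1\<^sub>m k) (0\<^sub>m k m) (0\<^sub>m m k) ?G"
  have G: "?G \<in> carrier_mat m m" using X by simp
  show E: "E \<in> carrier_mat (k + m) (k + m)" unfolding E_def using G by simp
  have kerE: "x @\<^sub>v y \<in> mat_kernel E \<longleftrightarrow> x = 0\<^sub>v k \<and> y \<in> mat_kernel X"
    if x: "x \<in> carrier_vec k" and y: "y \<in> carrier_vec m" for x y :: "real vec"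
  proof -
    have "E *\<^sub>v (x @\<^sub>v y) = x @\<^sub>v (?G *\<^sub>v y)"
      unfolding E_def using mult_mat_vec_split[OF one_carrier_mat G x y] x by simp
    then show ?thesis
      unfolding mat_kernel[OF E] mat_kernel_gram[OF X, symmetric] mat_kernel[OF G] zero_vec_append
      using x y G by simp
  qed
  show "mat_kernel E = (\<lambda>y. 0\<^sub>v k @\<^sub>v y) ` mat_kernel X"
  proof (intro equalityI subsetI)
    fix v assume v: "v \<in> mat_kernel E"
    then have "v \<in> carrier_vec (k + m)" using mat_kernel_carrier[OF E] by blast
    then have "v = vec_first v k @\<^sub>v vec_last v m" by simp
    then show "v \<in> (\<lambda>y. 0\<^sub>v k @\<^sub>v y) ` mat_kernel X"
      using kerE v by (metis image_eqI vec_first_carrier vec_last_carrier)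
  next
    fix v assume "v \<in> (\<lambda>y. 0\<^sub>v k @\<^sub>v y) ` mat_kernel X"
    then show "v \<in> mat_kernel E" using kerE mat_kernel_carrier[OF X] by auto
  qed
  have "kernel.dim (k + m) E = kernel.dim k (1\<^sub>m k :: real mat) + kernel.dim m ?G"
    by (rule kernel_four_block_0_mat[OF E_def one_carrier_mat G])
  then show "kernel_dim E = kernel_dim X"
    using kernel_one_mat(1)[of k, where ?'a = real] kernel_dim_cong[OF G X mat_kernel_gram[OF X]]
      E G X
    unfolding kernel_dim_def by simp
qed

lemma kernel_dim_le_of_zero_prefix_subset:
  fixes X :: "real mat"
  assumes X: "X \<in> carrier_mat r m" and Z: "Z \<in> carrier_mat r' (k + m)"
    and sub: "(\<lambda>y. 0\<^sub>v k @\<^sub>v y) ` mat_kernel X \<subseteq> mat_kernel Z"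
  shows "kernel_dim X \<le> kernel_dim Z"
proof -
  obtain E where "E \<in> carrier_mat (k + m) (k + m)"
    "mat_kernel E = (\<lambda>y. 0\<^sub>v k @\<^sub>v y) ` mat_kernel X" "kernel_dim E = kernel_dim X"
    using zero_prefix_kernel_mat[OF X, where k = k] by blast
  then show ?thesis using kernel_dim_mono[of E _ _ Z] Z sub by auto
qed

lemma kernel_dim_le_of_subset_zero_prefix:
  fixes X :: "real mat"
  assumes X: "X \<in> carrier_mat r m" and Z: "Z \<in> carrier_mat r' (k + m)"
    and sub: "mat_kernel Z \<subseteq> (\<lambda>y. 0\<^sub>v k @\<^sub>v y) ` mat_kernel X"
  shows "kernel_dim Z \<le> kernel_dim X"
proof -
  obtain E where "E \<in> carrier_mat (k + m) (k + m)"
    "mat_kernel E = (\<lambda>y. 0\<^sub>v k @\<^sub>v y) ` mat_kernel X" "kernel_dim E = kernel_dim X"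
    using zero_prefix_kernel_mat[OF X, where k = k] by blast
  then show ?thesis using kernel_dim_mono[OF Z, of E] sub by auto
qed

lemma kernel_dim_less_of_zero_prefix_subset:
  fixes X :: "real mat"
  assumes X: "X \<in> carrier_mat r m" and Z: "Z \<in> carrier_mat r' (k + m)"
    and sub: "(\<lambda>y. 0\<^sub>v k @\<^sub>v y) ` mat_kernel X \<subseteq> mat_kernel Z"
    and x: "x \<in> carrier_vec k" "x \<noteq> 0\<^sub>v k" and xy: "x @\<^sub>v y \<in> mat_kernel Z"
  shows "kernel_dim X < kernel_dim Z"
proof -
  obtain E where E: "E \<in> carrier_mat (k + m) (k + m)"
    "mat_kernel E = (\<lambda>y. 0\<^sub>v k @\<^sub>v y) ` mat_kernel X" "kernel_dim E = kernel_dim X"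
    using zero_prefix_kernel_mat[OF X, where k = k] by blast
  have "x @\<^sub>v y \<notin> mat_kernel E" using E(2) x append_vec_eq[OF x(1) zero_carrier_vec] by auto
  then show ?thesis using kernel_dim_strict_mono[OF E(1) Z _ xy] E(2,3) sub by auto
qed

lemma pick_compl_atLeastLessThan: "pick (- {0..<k}) i = k + i"
proof -
  have "{a \<in> - {0..<k}. a < k + i} = {k..<k + i}" by auto
  then show ?thesis using pick_card_in_set[of "k + i" "- {0..<k}"] by simp
qed

lemma principal_del_four_block_mat:
  assumes "B \<in> carrier_mat k k" "C \<in> carrier_mat k m" "E \<in> carrier_mat m k" "D \<in> carrier_mat m m"
  shows "principal_del (four_block_mat B C E D) {0..<k} = D"
proof -
  have "{i. i < k + m \<and> i \<in> - {0..<k}} = {k..<k + m}" by auto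
  then show ?thesis unfolding principal_del_def submatrix_def using assms
    by (intro eq_matI) (auto simp: pick_compl_atLeastLessThan)
qed

lemma P_set_leading_block_iff:
  assumes B: "B \<in> carrier_mat k k" and "C \<in> carrier_mat k m" "E \<in> carrier_mat m k"
    and D: "D \<in> carrier_mat m m"
  shows "P_set (four_block_mat B C E D) {0..<k} \<longleftrightarrow>
    mrank (four_block_mat B C E D) = mrank D + 2 * k"
proof -
  let ?A = "four_block_mat B C E D"
  have A: "?A \<in> carrier_mat (k + m) (k + m)" using assms by simp
  have "mrank ?A + nullity ?A = k + m" "mrank D + nullity D = m"
    unfolding mrank_def nullity_def using rank_nullity_mat[OF A] rank_nullity_mat[OF D] A D by auto
  then show ?thesis unfolding P_set_def principal_del_four_block_mat[OF assms] using A by auto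
qed

lemma four_block_mat_symmetric_lower_right:
  assumes "B \<in> carrier_mat k k" "C \<in> carrier_mat k m" "E \<in> carrier_mat m k" "D \<in> carrier_mat m m"
    and sym: "(four_block_mat B C E D)\<^sup>T = four_block_mat B C E D"
  shows "D\<^sup>T = D"
proof (rule eq_matI)
  fix i j assume "i < dim_row D" "j < dim_col D"
  then show "D\<^sup>T $$ (i, j) = D $$ (i, j)"
    using arg_cong[where f = "\<lambda>M. M $$ (k + i, k + j)", OF sym] assms(1-4) by simp
qed (use assms in auto)

locale symmetric_lower_right_block =
  fixes B C D :: "real mat" and k m :: nat
  assumes B: "B \<in> carrier_mat k k" and C: "C \<in> carrier_mat k m" and D: "D \<in> carrier_mat m m"
    and D_sym: "D\<^sup>T = D"
begin

abbreviation A :: "real mat" where "A \<equiv> four_block_mat B C C\<^sup>T D"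

definition right_cols :: "real mat" where "right_cols = C @\<^sub>r D"

definition lower_rows :: "real mat" where "lower_rows = right_cols\<^sup>T"

lemma A_carrier: "A \<in> carrier_mat (k + m) (k + m)"
  using B C D by simp

lemma right_cols_carrier: "right_cols \<in> carrier_mat (k + m) m"
  unfolding right_cols_def using C D by blast

lemma lower_rows_carrier: "lower_rows \<in> carrier_mat m (k + m)"
  unfolding lower_rows_def using right_cols_carrier by simp

lemma mat_kernel_A_iff:
  assumes x: "x \<in> carrier_vec k" and y: "y \<in> carrier_vec m"
  shows "x @\<^sub>v y \<in> mat_kernel A \<longleftrightarrow> B *\<^sub>v x + C *\<^sub>v y = 0\<^sub>v k \<and> C\<^sup>T *\<^sub>v x + D *\<^sub>v y = 0\<^sub>v m"
proof -
  have "A *\<^sub>v (x @\<^sub>v y) = (B *\<^sub>v x + C *\<^sub>v y) @\<^sub>v (C\<^sup>T *\<^sub>v x + D *\<^sub>v y)"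
    using four_block_mat_mult_vec[OF B C _ D x y] C by simp
  moreover have "B *\<^sub>v x + C *\<^sub>v y \<in> carrier_vec k" using B C x y by simp
  ultimately show ?thesis
    unfolding mat_kernel[OF A_carrier] zero_vec_append using x y by simp
qed

lemma mat_kernel_lower_rows_iff:
  assumes x: "x \<in> carrier_vec k" and y: "y \<in> carrier_vec m"
  shows "x @\<^sub>v y \<in> mat_kernel lower_rows \<longleftrightarrow> C\<^sup>T *\<^sub>v x + D *\<^sub>v y = 0\<^sub>v m"
proof -
  have "lower_rows = four_block_mat C\<^sup>T D (0\<^sub>m 0 k) (0\<^sub>m 0 m)"
    unfolding lower_rows_def right_cols_def append_rows_def
    using transpose_four_block_mat[OF C zero_carrier_mat D zero_carrier_mat] C D D_sym by simp
  then have "lower_rows *\<^sub>v (x @\<^sub>v y) = (C\<^sup>T *\<^sub>v x + D *\<^sub>v y) @\<^sub>v (0\<^sub>m 0 k *\<^sub>v x + 0\<^sub>m 0 m *\<^sub>v y)"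
    using four_block_mat_mult_vec[OF _ D zero_carrier_mat zero_carrier_mat x y] C by simp
  also have "\<dots> = C\<^sup>T *\<^sub>v x + D *\<^sub>v y"
    by (rule eq_vecI) (use C D x y in auto)
  finally show ?thesis
    unfolding mat_kernel[OF lower_rows_carrier] using x y by simp
qed

lemma mat_kernel_A_subset_lower_rows: "mat_kernel A \<subseteq> mat_kernel lower_rows"
proof
  fix v assume v: "v \<in> mat_kernel A"
  then have "v \<in> carrier_vec (k + m)" using mat_kernel_carrier[OF A_carrier] by blast
  then have "v = vec_first v k @\<^sub>v vec_last v m" by simp
  then show "v \<in> mat_kernel lower_rows"
    using v mat_kernel_A_iff mat_kernel_lower_rows_iff by (metis vec_first_carrier vec_last_carrier)
qed

lemma mat_kernel_right_cols_iff:
  assumes y: "y \<in> carrier_vec m"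
  shows "y \<in> mat_kernel right_cols \<longleftrightarrow> C *\<^sub>v y = 0\<^sub>v k \<and> D *\<^sub>v y = 0\<^sub>v m"
proof -
  have "right_cols *\<^sub>v y = C *\<^sub>v y @\<^sub>v D *\<^sub>v y"
    unfolding right_cols_def using mat_mult_append[OF C D y] .
  moreover have "C *\<^sub>v y \<in> carrier_vec k" using C y by simp
  ultimately show ?thesis
    unfolding mat_kernel[OF right_cols_carrier] zero_vec_append using y by simp
qed

lemma zero_prefix_mat_kernel_A_iff:
  assumes y: "y \<in> carrier_vec m"
  shows "0\<^sub>v k @\<^sub>v y \<in> mat_kernel A \<longleftrightarrow> y \<in> mat_kernel right_cols"
  using mat_kernel_A_iff[OF zero_carrier_vec y] mat_kernel_right_cols_iff[OF y]
    mult_mat_vec_zero[OF B] mult_mat_vec_zero[of "C\<^sup>T" m k] B C D y by simp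

lemma zero_prefix_mat_kernel_lower_rows_iff:
  assumes y: "y \<in> carrier_vec m"
  shows "0\<^sub>v k @\<^sub>v y \<in> mat_kernel lower_rows \<longleftrightarrow> y \<in> mat_kernel D"
  using mat_kernel_lower_rows_iff[OF zero_carrier_vec y] mult_mat_vec_zero[of "C\<^sup>T" m k]
    mat_kernel[OF D] C D y by simp

lemma row_space_iff_kernel_lower_rows:
  assumes x: "x \<in> carrier_vec k"
  shows "C\<^sup>T *\<^sub>v x \<in> RS D \<longleftrightarrow> (\<exists>y\<in>carrier_vec m. x @\<^sub>v y \<in> mat_kernel lower_rows)"
proof -
  have CTx: "C\<^sup>T *\<^sub>v x \<in> carrier_vec m" using C x by simp
  have RS: "RS D = {w \<in> carrier_vec m. \<exists>z\<in>carrier_vec m. D *\<^sub>v z = w}"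
    unfolding RS_def using vec_space.row_space_eq[OF D] D D_sym by simp
  have kernel_iff: "x @\<^sub>v y \<in> mat_kernel lower_rows \<longleftrightarrow> D *\<^sub>v (- y) = C\<^sup>T *\<^sub>v x"
    if y: "y \<in> carrier_vec m" for y
    using mat_kernel_lower_rows_iff[OF x y] add_vec_eq_0_iff[OF CTx, of "D *\<^sub>v y"]
      mult_mat_vec_uminus[OF D y] D y by auto
  show ?thesis
  proof
    assume "C\<^sup>T *\<^sub>v x \<in> RS D"
    then obtain z where z: "z \<in> carrier_vec m" "D *\<^sub>v z = C\<^sup>T *\<^sub>v x" using RS by auto
    then show "\<exists>y\<in>carrier_vec m. x @\<^sub>v y \<in> mat_kernel lower_rows"
      using kernel_iff[of "- z"] by (intro bexI[of _ "- z"]) auto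
  next
    assume "\<exists>y\<in>carrier_vec m. x @\<^sub>v y \<in> mat_kernel lower_rows"
    then show "C\<^sup>T *\<^sub>v x \<in> RS D" using RS kernel_iff CTx by fastforce
  qed
qed

lemma zero_in_row_space_preimage: "0\<^sub>v k \<in> {x \<in> carrier_vec k. C\<^sup>T *\<^sub>v x \<in> RS D}"
proof -
  have "0\<^sub>v k @\<^sub>v 0\<^sub>v m \<in> mat_kernel lower_rows"
    using zero_prefix_mat_kernel_lower_rows_iff[OF zero_carrier_vec]
      mat_kernelI[OF D zero_carrier_vec mult_mat_vec_zero[OF D]] by simp
  then show ?thesis
    using row_space_iff_kernel_lower_rows[OF zero_carrier_vec] zero_carrier_vec[of k] zero_carrier_vec[of m]
    by blast
qed

lemma kernel_lower_rows_zero_prefix: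
  assumes S: "{x \<in> carrier_vec k. C\<^sup>T *\<^sub>v x \<in> RS D} = {0\<^sub>v k}"
    and v: "v \<in> mat_kernel lower_rows"
  obtains y where "y \<in> carrier_vec m" "v = 0\<^sub>v k @\<^sub>v y"
proof
  have vc: "v \<in> carrier_vec (k + m)" using mat_kernel_carrier[OF lower_rows_carrier] v by blast
  then have "vec_first v k @\<^sub>v vec_last v m \<in> mat_kernel lower_rows" using v by simp
  then have "C\<^sup>T *\<^sub>v vec_first v k \<in> RS D"
    using row_space_iff_kernel_lower_rows[OF vec_first_carrier] vec_last_carrier by blast
  then have "vec_first v k = 0\<^sub>v k" using S vec_first_carrier by blast
  then show "v = 0\<^sub>v k @\<^sub>v vec_last v m" using vc by (metis vec_first_last_append)
qed simp

lemma rank_kernel_dim_balance: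
  "mrank A + kernel_dim A + kernel_dim lower_rows =
    mrank D + 2 * k + kernel_dim right_cols + kernel_dim D"
proof -
  have "mrank A + kernel_dim A = k + m" "mrank D + kernel_dim D = m"
    unfolding mrank_def using rank_nullity_mat[OF A_carrier] rank_nullity_mat[OF D] A_carrier D
    by auto
  moreover have "vec_space.rank (k + m) right_cols + kernel_dim right_cols = m"
    by (rule rank_nullity_mat[OF right_cols_carrier])
  moreover have "vec_space.rank m lower_rows + kernel_dim lower_rows = k + m"
    by (rule rank_nullity_mat[OF lower_rows_carrier])
  moreover have "vec_space.rank m lower_rows = vec_space.rank (k + m) right_cols"
    unfolding lower_rows_def by (rule rank_transpose[OF right_cols_carrier])
  ultimately show ?thesis by linarith
qed

lemma kernel_dim_right_cols_le: "kernel_dim right_cols \<le> kernel_dim A"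
  by (rule kernel_dim_le_of_zero_prefix_subset[OF right_cols_carrier A_carrier])
    (use zero_prefix_mat_kernel_A_iff mat_kernel_carrier[OF right_cols_carrier] in auto)

lemma kernel_dim_D_le_lower_rows: "kernel_dim D \<le> kernel_dim lower_rows"
  by (rule kernel_dim_le_of_zero_prefix_subset[OF D lower_rows_carrier])
    (use zero_prefix_mat_kernel_lower_rows_iff mat_kernel_carrier[OF D] in auto)

lemma kernel_dims_le_if_row_space_preimage_trivial:
  assumes S: "{x \<in> carrier_vec k. C\<^sup>T *\<^sub>v x \<in> RS D} = {0\<^sub>v k}"
  shows "kernel_dim A \<le> kernel_dim right_cols" "kernel_dim lower_rows \<le> kernel_dim D"
proof -
  have "mat_kernel A \<subseteq> (\<lambda>y. 0\<^sub>v k @\<^sub>v y) ` mat_kernel right_cols"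
  proof
    fix v assume v: "v \<in> mat_kernel A"
    then obtain y where "y \<in> carrier_vec m" "v = 0\<^sub>v k @\<^sub>v y"
      using kernel_lower_rows_zero_prefix[OF S] mat_kernel_A_subset_lower_rows by blast
    then show "v \<in> (\<lambda>y. 0\<^sub>v k @\<^sub>v y) ` mat_kernel right_cols"
      using v zero_prefix_mat_kernel_A_iff by auto
  qed
  then show "kernel_dim A \<le> kernel_dim right_cols"
    by (rule kernel_dim_le_of_subset_zero_prefix[OF right_cols_carrier A_carrier])
  have "mat_kernel lower_rows \<subseteq> (\<lambda>y. 0\<^sub>v k @\<^sub>v y) ` mat_kernel D"
  proof
    fix v assume v: "v \<in> mat_kernel lower_rows"
    then obtain y where "y \<in> carrier_vec m" "v = 0\<^sub>v k @\<^sub>v y"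
      using kernel_lower_rows_zero_prefix[OF S] by blast
    then show "v \<in> (\<lambda>y. 0\<^sub>v k @\<^sub>v y) ` mat_kernel D"
      using v zero_prefix_mat_kernel_lower_rows_iff by auto
  qed
  then show "kernel_dim lower_rows \<le> kernel_dim D"
    by (rule kernel_dim_le_of_subset_zero_prefix[OF D lower_rows_carrier])
qed

lemma kernel_dim_D_less_lower_rows:
  assumes x: "x \<in> carrier_vec k" "C\<^sup>T *\<^sub>v x \<in> RS D" "x \<noteq> 0\<^sub>v k"
  shows "kernel_dim D < kernel_dim lower_rows"
proof -
  obtain y where "y \<in> carrier_vec m" "x @\<^sub>v y \<in> mat_kernel lower_rows"
    using row_space_iff_kernel_lower_rows x(1,2) by blast
  then show ?thesis
    using kernel_dim_less_of_zero_prefix_subset[OF D lower_rows_carrier _ x(1,3)]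
      zero_prefix_mat_kernel_lower_rows_iff mat_kernel_carrier[OF D] by auto
qed

theorem rank_eq_iff_row_space_preimage_trivial:
  "mrank A = mrank D + 2 * k \<longleftrightarrow> {x \<in> carrier_vec k. C\<^sup>T *\<^sub>v x \<in> RS D} = {0\<^sub>v k}"
    (is "_ \<longleftrightarrow> ?S = _")
proof
  assume rank: "mrank A = mrank D + 2 * k"
  show "?S = {0\<^sub>v k}"
  proof (rule ccontr)
    assume "?S \<noteq> {0\<^sub>v k}"
    then obtain x where "x \<in> carrier_vec k" "C\<^sup>T *\<^sub>v x \<in> RS D" "x \<noteq> 0\<^sub>v k"
      using zero_in_row_space_preimage by blast
    then show False
      using kernel_dim_D_less_lower_rows rank rank_kernel_dim_balance kernel_dim_right_cols_le
      by fastforce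
  qed
next
  assume "?S = {0\<^sub>v k}"
  then show "mrank A = mrank D + 2 * k"
    using kernel_dims_le_if_row_space_preimage_trivial rank_kernel_dim_balance
      kernel_dim_right_cols_le kernel_dim_D_le_lower_rows by fastforce
qed

end

theorem theorem2p2:
  fixes A B C D :: "real mat" and n k :: nat
  assumes "k \<le> n"
    and "B \<in> carrier_mat k k" and "C \<in> carrier_mat k (n - k)"
    and "D \<in> carrier_mat (n - k) (n - k)"
    and "A = four_block_mat B C (transpose_mat C) D"
    and "transpose_mat A = A"
  shows "(P_set A {0..<k} \<longleftrightarrow> mrank A = mrank D + 2 * k)
       \<and> (mrank A = mrank D + 2 * k \<longleftrightarrow>
            {x \<in> carrier_vec k. transpose_mat C *\<^sub>v x \<in> RS D} = {0\<^sub>v k})"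
proof -
  define m where "m = n - k"
  have C: "C \<in> carrier_mat k m" and D: "D \<in> carrier_mat m m"
    using assms(3,4) unfolding m_def by simp_all
  have CT: "C\<^sup>T \<in> carrier_mat m k" using C by simp
  have "D\<^sup>T = D"
    using four_block_mat_symmetric_lower_right[OF assms(2) C CT D] assms(5,6) by simp
  then interpret symmetric_lower_right_block B C D k m
    using assms(2) C D by unfold_locales
  show ?thesis
    using P_set_leading_block_iff[OF assms(2) C CT D] rank_eq_iff_row_space_preimage_trivial
    unfolding assms(5) by simp
qed

end
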